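(* Consider the noisy group testing model in the context with $K>1$ and $p=\frac{1}{(1-u)K}$, and let $\Gamma=(1-q)\left(1-(1-u)p\right)^K$, $\gamma_0=\frac{u}{1-(1-u)p}$. For RoAl set $\psi_0=0$; for CoAl set $\psi_0=\frac{\gamma_0\Gamma}{1-\gamma_0\Gamma}$ and use the parameter $\psi_{cb}=\psi_0$. Let $c_0>0$ be any constant. Then there exist absolute constants $C_{a1},C_{a2}>0$, independent of $N$, $L$ and $K$ (and different for each of the two algorithms), such that if the number of tests satisfies $$M\ \ge\ (1+c_0)\,\frac{K(1-u)}{(1-q)(1-\gamma_0)^2(1+\psi_0)}\left(\frac{C_{a1}\log\left[K\binom{N-K}{L-1}\right]}{(N-K)-(L-1)}+C_{a2}\log K\right),$$ then, for a given defective set $S_d$, each of the algorithms RoAl and CoAl outputs $L$ items none of which is defective with probability exceeding $1-\exp\left(-c_0\log\left(K\binom{N-K}{L-1}\right)\right)-\exp(-c_0\log K)$.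
   Context: Group testing model: $N$ items indexed by $[N]$; a fixed defective set $S_d\subset[N]$ with $|S_d|=K$; $1\le L\le N-K$ is the desired number of non-defective items. Parameters $p\in(0,1)$, $u\in[0,1/2)$, $q\in[0,1/2)$. The test matrix $\mathbf{X}\in\{0,1\}^{M\times N}$ has i.i.d. Bernoulli($p$) entries $X_{lk}$; independently, $D_{lk}\sim\mathrm{Bernoulli}(1-u)$ i.i.d. and $W_l\sim\mathrm{Bernoulli}(q)$ i.i.d.; test outcomes are $Y_l=\left(\bigvee_{k\in S_d}D_{lk}X_{lk}\right)\vee W_l$, $l\in[M]$ ($\vee$ = boolean OR). Logarithms are natural. Algorithm RoAl: for each item $k$, compute $z(k)=\#\{l: Y_l=0,\ X_{lk}=1\}$ (the number of negative-outcome tests containing $k$); output a set of $L$ items with the largest values of $z$ (ties broken arbitrarily). Algorithm CoAl (with parameter $\psi_{cb}\ge0$): for each item $k$ compute $\mathcal{T}(k)=\#\{l: Y_l=0,X_{lk}=1\}-\psi_{cb}\,\#\{l:Y_l=1,X_{lk}=1\}$; output a set of $L$ items with the largest values of $\mathcal{T}$ (ties broken arbitrarily). An algorithm succeeds if its output set is disjoint from $S_d$; probabilities are over $\mathbf{X}$, $D$, $W$. *)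

theory Defs
  imports "HOL-Probability.Probability"
begin

text \<open>Items are indexed by {..<N}, tests by {..<M}.  A sample is a triple (X, D, W):
  X (l,k) test matrix entries ~ Bernoulli p, D (l,k) ~ Bernoulli (1-u), W l ~ Bernoulli q,
  all independent.\<close>

type_synonym gt_sample = "(nat \<times> nat \<Rightarrow> bool) \<times> (nat \<times> nat \<Rightarrow> bool) \<times> (nat \<Rightarrow> bool)"

definition gt_pmf :: "nat \<Rightarrow> nat \<Rightarrow> real \<Rightarrow> real \<Rightarrow> real \<Rightarrow> gt_sample pmf" where
  "gt_pmf M N p u q =
     do { X \<leftarrow> Pi_pmf ({..<M} \<times> {..<N}) False (\<lambda>_. bernoulli_pmf p);
          D \<leftarrow> Pi_pmf ({..<M} \<times> {..<N}) False (\<lambda>_. bernoulli_pmf (1 - u));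
          W \<leftarrow> Pi_pmf {..<M} False (\<lambda>_. bernoulli_pmf q);
          return_pmf (X, D, W) }"

definition gt_outcome :: "nat set \<Rightarrow> gt_sample \<Rightarrow> nat \<Rightarrow> bool" where
  "gt_outcome Sd s l = (case s of (X, D, W) \<Rightarrow> (\<exists>k\<in>Sd. D (l, k) \<and> X (l, k)) \<or> W l)"

definition roal_score :: "nat \<Rightarrow> nat set \<Rightarrow> gt_sample \<Rightarrow> nat \<Rightarrow> real" where
  "roal_score M Sd s k =
     real (card {l \<in> {..<M}. \<not> gt_outcome Sd s l \<and> fst s (l, k)})"

definition coal_score :: "real \<Rightarrow> nat \<Rightarrow> nat set \<Rightarrow> gt_sample \<Rightarrow> nat \<Rightarrow> real" where
  "coal_score psi M Sd s k =
     real (card {l \<in> {..<M}. \<not> gt_outcome Sd s l \<and> fst s (l, k)})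
     - psi * real (card {l \<in> {..<M}. gt_outcome Sd s l \<and> fst s (l, k)})"

text \<open>Possible outputs of "take L items with largest scores, ties broken arbitrarily".\<close>
definition top_sets :: "nat \<Rightarrow> nat \<Rightarrow> (nat \<Rightarrow> real) \<Rightarrow> nat set set" where
  "top_sets N L score =
     {T. T \<subseteq> {..<N} \<and> card T = L \<and> (\<forall>a\<in>T. \<forall>b\<in>{..<N} - T. score b \<le> score a)}"

text \<open>Success regardless of tie-breaking: every admissible output avoids the defectives.\<close>
definition alg_succeeds :: "nat \<Rightarrow> nat \<Rightarrow> nat set \<Rightarrow> (nat \<Rightarrow> real) \<Rightarrow> bool" where
  "alg_succeeds N L Sd score = (\<forall>T\<in>top_sets N L score. T \<inter> Sd = {})"

end

theory Submission
  imports Defs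
begin

text \<open>Both algorithms score an item by +1 for every negative test containing it and
  -\<psi> for every positive one (\<psi> = 0 for RoAl).  With p = 1/((1-u)K) a test is
  negative with probability bounded away from 0, and the mean increment per test of a
  non-defective item exceeds that of a defective one by a gap depending on u only.  The
  tests are i.i.d., so Chernoff bounds factor over tests: with enough tests every defective
  scores below the midpoint threshold, while no set of N - K - (L - 1) non-defectives
  stays below it.  For the latter one conditions on the outcomes, given which non-defective
  columns are still independent Bernoulli(p).  A union bound over the K defectives and the
  binomial(N-K, L-1) sets of non-defectives gives the claim.\<close>

section \<open>Products of Bernoulli distributions\<close>

lemma Pi_pmf_Times:
  assumes A: "finite A" and B: "finite B"
  shows "Pi_pmf (A \<times> B) dflt (\<lambda>_. P) =
         map_pmf (\<lambda>F (a,b). F a b) (Pi_pmf A (\<lambda>_. dflt) (\<lambda>_. Pi_pmf B dflt (\<lambda>_. P)))"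
proof (rule pmf_eqI)
  fix g :: "'a \<times> 'b \<Rightarrow> 'c"
  have inj: "inj (case_prod :: ('a \<Rightarrow> 'b \<Rightarrow> 'c) \<Rightarrow> _)"
    by (auto simp: inj_def fun_eq_iff)
  have "pmf (map_pmf (\<lambda>F (a,b). F a b) (Pi_pmf A (\<lambda>_. dflt) (\<lambda>_. Pi_pmf B dflt (\<lambda>_. P)))) g
      = pmf (Pi_pmf A (\<lambda>_. dflt) (\<lambda>_. Pi_pmf B dflt (\<lambda>_. P))) (curry g)"
    using pmf_map_inj'[OF inj, where x="curry g"] by simp
  also have "\<dots> = pmf (Pi_pmf (A \<times> B) dflt (\<lambda>_. P)) g"
  proof (cases "\<forall>x. x \<notin> A \<times> B \<longrightarrow> g x = dflt")
    case True
    have "pmf (Pi_pmf A (\<lambda>_. dflt) (\<lambda>_. Pi_pmf B dflt (\<lambda>_. P))) (curry g)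
        = (\<Prod>a\<in>A. pmf (Pi_pmf B dflt (\<lambda>_. P)) (curry g a))"
      using True A by (subst pmf_Pi) (auto simp: fun_eq_iff)
    also have "\<dots> = (\<Prod>a\<in>A. \<Prod>b\<in>B. pmf P (g (a,b)))"
      using True B by (intro prod.cong refl, subst pmf_Pi) auto
    also have "\<dots> = (\<Prod>x\<in>A\<times>B. pmf P (g x))"
      by (simp add: prod.cartesian_product)
    also have "\<dots> = pmf (Pi_pmf (A \<times> B) dflt (\<lambda>_. P)) g"
      using True A B by (subst pmf_Pi) auto
    finally show ?thesis .
  next
    case False
    then obtain a b where ab: "(a,b) \<notin> A \<times> B" "g (a,b) \<noteq> dflt" by auto
    have rhs: "pmf (Pi_pmf (A \<times> B) dflt (\<lambda>_. P)) g = 0"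
      using False A B by (subst pmf_Pi) auto
    show ?thesis
    proof (cases "a \<in> A")
      case True
      with ab have "pmf (Pi_pmf B dflt (\<lambda>_. P)) (curry g a) = 0"
        using B by (subst pmf_Pi) auto
      hence "(\<Prod>a\<in>A. pmf (Pi_pmf B dflt (\<lambda>_. P)) (curry g a)) = 0"
        using True A by (intro prod_zero) auto
      thus ?thesis using A rhs by (subst pmf_Pi) auto
    next
      case False
      have "curry g a \<noteq> (\<lambda>_. dflt)" using ab by (auto simp: fun_eq_iff)
      thus ?thesis using A rhs False by (subst pmf_Pi) auto
    qed
  qed
  finally show "pmf (Pi_pmf (A \<times> B) dflt (\<lambda>_. P)) g =
     pmf (map_pmf (\<lambda>F (a,b). F a b) (Pi_pmf A (\<lambda>_. dflt) (\<lambda>_. Pi_pmf B dflt (\<lambda>_. P)))) g" ..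
qed

lemma nn_integral_Pi_pmf_Times_prod:
  assumes "finite A" and "finite B"
  shows "(\<integral>\<^sup>+D. (\<Prod>a\<in>A. f a (\<lambda>b. D (a,b))) \<partial>Pi_pmf (A \<times> B) dflt (\<lambda>_. P))
       = (\<Prod>a\<in>A. \<integral>\<^sup>+d. f a d \<partial>Pi_pmf B dflt (\<lambda>_. P))"
  by (subst Pi_pmf_Times[OF assms]) (simp add: nn_integral_prod_Pi_pmf[OF assms(1)] del: Pi_pmf_return_pmf)

lemma finite_set_pmf_Pi_bernoulli: "finite (set_pmf (Pi_pmf {..<(N::nat)} False (\<lambda>_. bernoulli_pmf r)))"
  by (subst set_Pi_pmf) (auto intro!: finite_PiE_dflt simp del: lessThan_iff)

lemma finite_set_pmf_bernoulli: "finite (set_pmf (bernoulli_pmf r))"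
  by (rule finite_subset[of _ UNIV]) auto

lemma nn_integral_eq_expectation_finite_pmf:
  fixes f :: "'a \<Rightarrow> real"
  assumes "finite (set_pmf P)" and "\<And>x. f x \<ge> 0"
  shows "(\<integral>\<^sup>+x. ennreal (f x) \<partial>P) = ennreal (measure_pmf.expectation P f)"
  using assms by (intro nn_integral_eq_integral integrable_measure_pmf_finite) auto

lemma expectation_Pi_pmf_bernoulli_prod:
  fixes N :: nat
  assumes "0 \<le> r" "r \<le> 1" "\<And>k b. f k b \<ge> (0::real)"
  shows "measure_pmf.expectation (Pi_pmf {..<N} False (\<lambda>_. bernoulli_pmf r)) (\<lambda>x. \<Prod>k<N. f k (x k))
     = (\<Prod>k<N. r * f k True + (1 - r) * f k False)"
  using assms
  by (subst expectation_prod_Pi_pmf)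
     (auto intro!: integrable_measure_pmf_finite finite_set_pmf_bernoulli prod.cong simp: algebra_simps)

lemma prob_le_by_Markov:
  fixes F :: "'a \<Rightarrow> ennreal" and P :: "'a pmf"
  assumes A: "\<And>s. A s \<Longrightarrow> ennreal c \<le> F s" and c: "c > 0"
    and F: "(\<integral>\<^sup>+s. F s \<partial>P) \<le> ennreal (c * x)" and x: "x \<ge> 0"
  shows "measure_pmf.prob P {s. A s} \<le> x"
proof -
  have "ennreal c * emeasure P {s. A s} = (\<integral>\<^sup>+s. ennreal c * indicator {s. A s} s \<partial>P)"
    by (simp add: nn_integral_cmult_indicator)
  also have "\<dots> \<le> (\<integral>\<^sup>+s. F s \<partial>P)"
    by (intro nn_integral_mono) (auto simp: indicator_def A)
  also have "\<dots> \<le> ennreal (c * x)" by (rule F)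
  finally have "ennreal c * ennreal (measure_pmf.prob P {s. A s}) \<le> ennreal (c * x)"
    by (simp add: measure_pmf.emeasure_eq_measure)
  hence "c * measure_pmf.prob P {s. A s} \<le> c * x"
    using c x by (simp add: ennreal_mult'[symmetric])
  thus ?thesis using c by simp
qed

lemma prob_Collect_eq_1_minus_prob_not:
  "measure_pmf.prob P {s. Q s} = 1 - measure_pmf.prob P {s. \<not> Q s}"
proof -
  have "UNIV - {s. \<not> Q s} = {s. Q s}" by blast
  thus ?thesis using measure_pmf.prob_compl[of "{s. \<not> Q s}" P] by simp
qed

lemma prob_le_union_bound:
  fixes P :: "'a pmf" and x a b :: real
  assumes "finite I" "finite J"
    and sub: "E \<subseteq> X \<union> (\<Union>i\<in>I. A i) \<union> (\<Union>j\<in>J. B j)"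
    and X: "measure_pmf.prob P X \<le> x" and A: "\<And>i. i \<in> I \<Longrightarrow> measure_pmf.prob P (A i) \<le> a"
    and B: "\<And>j. j \<in> J \<Longrightarrow> measure_pmf.prob P (B j) \<le> b"
  shows "measure_pmf.prob P E \<le> x + card I * a + card J * b"
proof -
  have "measure_pmf.prob P (\<Union>i\<in>I. A i) \<le> (\<Sum>i\<in>I. measure_pmf.prob P (A i))"
    using assms(1) by (intro measure_pmf.finite_measure_subadditive_finite) auto
  also have "\<dots> \<le> card I * a" using A sum_mono[of I _ "\<lambda>_. a"] by simp
  finally have UA: "measure_pmf.prob P (\<Union>i\<in>I. A i) \<le> card I * a" .
  have "measure_pmf.prob P (\<Union>j\<in>J. B j) \<le> (\<Sum>j\<in>J. measure_pmf.prob P (B j))"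
    using assms(2) by (intro measure_pmf.finite_measure_subadditive_finite) auto
  also have "\<dots> \<le> card J * b" using B sum_mono[of J _ "\<lambda>_. b"] by simp
  finally have UB: "measure_pmf.prob P (\<Union>j\<in>J. B j) \<le> card J * b" .
  have "measure_pmf.prob P E \<le> measure_pmf.prob P (X \<union> (\<Union>i\<in>I. A i) \<union> (\<Union>j\<in>J. B j))"
    using sub by (intro measure_pmf.finite_measure_mono) auto
  also have "\<dots> \<le> measure_pmf.prob P X + measure_pmf.prob P (\<Union>i\<in>I. A i) + measure_pmf.prob P (\<Union>j\<in>J. B j)"
    using measure_Un_le[of X "measure_pmf P" "\<Union>i\<in>I. A i"]
      measure_Un_le[of "X \<union> (\<Union>i\<in>I. A i)" "measure_pmf P" "\<Union>j\<in>J. B j"] by auto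
  finally show ?thesis using X UA UB by linarith
qed

section \<open>Independent test rows\<close>

lemma prod_of_bool:
  "finite A \<Longrightarrow> (\<Prod>x\<in>A. of_bool (P x)) = (of_bool (\<forall>x\<in>A. P x) :: 'b :: comm_semiring_1)"
  by (induction A rule: finite_induct) auto

lemma prod_if_disjoint:
  assumes "finite I" "A \<subseteq> I" "B \<subseteq> I" "A \<inter> B = {}"
  shows "(\<Prod>k\<in>I. if k \<in> A then g k else if k \<in> B then h k else 1) = prod g A * prod h B"
proof -
  have fin: "finite A" "finite B" using assms by (meson finite_subset)+
  have "(\<Prod>k\<in>I. if k \<in> A then g k else if k \<in> B then h k else 1) =
        (\<Prod>k\<in>A \<union> B. if k \<in> A then g k else if k \<in> B then h k else 1)"
    using assms by (intro prod.mono_neutral_right) auto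
  also have "\<dots> = prod g A * prod h B"
    using assms fin by (subst prod.union_disjoint) (auto intro!: arg_cong2[where f="(*)"] prod.cong)
  finally show ?thesis .
qed

definition test_row :: "gt_sample \<Rightarrow> nat \<Rightarrow> (nat \<Rightarrow> bool) \<times> (nat \<Rightarrow> bool) \<times> bool" where
  "test_row s l = (\<lambda>k. fst s (l,k), \<lambda>k. fst (snd s) (l,k), snd (snd s) l)"

definition row_expectation ::
  "nat \<Rightarrow> real \<Rightarrow> real \<Rightarrow> real \<Rightarrow> ((nat \<Rightarrow> bool) \<times> (nat \<Rightarrow> bool) \<times> bool \<Rightarrow> real) \<Rightarrow> real" where
  "row_expectation N p u q g =
     measure_pmf.expectation (Pi_pmf {..<N} False (\<lambda>_. bernoulli_pmf p)) (\<lambda>x.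
       measure_pmf.expectation (Pi_pmf {..<N} False (\<lambda>_. bernoulli_pmf (1-u))) (\<lambda>d.
         measure_pmf.expectation (bernoulli_pmf q) (\<lambda>w. g (x,d,w))))"

lemma row_expectation_nonneg: "(\<And>r. g r \<ge> 0) \<Longrightarrow> row_expectation N p u q g \<ge> 0"
  unfolding row_expectation_def by (intro integral_nonneg_AE AE_I2)+ auto

lemma row_expectation_add:
  "row_expectation N p u q (\<lambda>r. f r + g r) = row_expectation N p u q f + row_expectation N p u q g"
  unfolding row_expectation_def
  by (simp add: Bochner_Integration.integral_add integrable_measure_pmf_finite
      finite_set_pmf_Pi_bernoulli finite_set_pmf_bernoulli)

lemma row_expectation_diff:
  "row_expectation N p u q (\<lambda>r. f r - g r) = row_expectation N p u q f - row_expectation N p u q g"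
  unfolding row_expectation_def
  by (simp add: Bochner_Integration.integral_diff integrable_measure_pmf_finite
      finite_set_pmf_Pi_bernoulli finite_set_pmf_bernoulli)

lemma row_expectation_cmult: "row_expectation N p u q (\<lambda>r. c * f r) = c * row_expectation N p u q f"
  unfolding row_expectation_def by simp

lemma row_expectation_const: "row_expectation N p u q (\<lambda>r. c) = c"
  unfolding row_expectation_def by simp

lemma nn_integral_prod_test_rows:
  assumes g: "\<And>r. g r \<ge> 0"
  shows "(\<integral>\<^sup>+s. (\<Prod>l<M. ennreal (g (test_row s l))) \<partial>gt_pmf M N p u q)
       = ennreal (row_expectation N p u q g) ^ M"
proof -
  let ?PX = "Pi_pmf {..<N} False (\<lambda>_. bernoulli_pmf p)"
  let ?PD = "Pi_pmf {..<N} False (\<lambda>_. bernoulli_pmf (1 - u))"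
  have "(\<integral>\<^sup>+s. (\<Prod>l<M. ennreal (g (test_row s l))) \<partial>gt_pmf M N p u q) =
    (\<integral>\<^sup>+X. \<integral>\<^sup>+D. \<integral>\<^sup>+W. (\<Prod>l<M. ennreal (g (\<lambda>k. X (l,k), \<lambda>k. D (l,k), W l)))
       \<partial>Pi_pmf {..<M} False (\<lambda>_. bernoulli_pmf q)
       \<partial>Pi_pmf ({..<M} \<times> {..<N}) False (\<lambda>_. bernoulli_pmf (1 - u))
       \<partial>Pi_pmf ({..<M} \<times> {..<N}) False (\<lambda>_. bernoulli_pmf p))"
    by (simp add: gt_pmf_def test_row_def)
  also have "\<dots> = (\<integral>\<^sup>+X. \<integral>\<^sup>+D. (\<Prod>l<M. \<integral>\<^sup>+w. ennreal (g (\<lambda>k. X (l,k), \<lambda>k. D (l,k), w)) \<partial>bernoulli_pmf q)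
       \<partial>Pi_pmf ({..<M} \<times> {..<N}) False (\<lambda>_. bernoulli_pmf (1 - u))
       \<partial>Pi_pmf ({..<M} \<times> {..<N}) False (\<lambda>_. bernoulli_pmf p))"
    by (subst nn_integral_prod_Pi_pmf) auto
  also have "\<dots> = (\<integral>\<^sup>+X. (\<Prod>l<M. \<integral>\<^sup>+d. \<integral>\<^sup>+w. ennreal (g (\<lambda>k. X (l,k), d, w)) \<partial>bernoulli_pmf q \<partial>?PD)
       \<partial>Pi_pmf ({..<M} \<times> {..<N}) False (\<lambda>_. bernoulli_pmf p))"
    by (subst nn_integral_Pi_pmf_Times_prod
          [where f = "\<lambda>l d. \<integral>\<^sup>+w. ennreal (g (\<lambda>k. X (l,k), d, w)) \<partial>bernoulli_pmf q" for X]) auto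
  also have "\<dots> = (\<Prod>l<M. \<integral>\<^sup>+x. \<integral>\<^sup>+d. \<integral>\<^sup>+w. ennreal (g (x, d, w)) \<partial>bernoulli_pmf q \<partial>?PD \<partial>?PX)"
    by (subst nn_integral_Pi_pmf_Times_prod
          [where f = "\<lambda>l x. \<integral>\<^sup>+d. \<integral>\<^sup>+w. ennreal (g (x, d, w)) \<partial>bernoulli_pmf q \<partial>?PD"]) auto
  also have "(\<integral>\<^sup>+x. \<integral>\<^sup>+d. \<integral>\<^sup>+w. ennreal (g (x, d, w)) \<partial>bernoulli_pmf q \<partial>?PD \<partial>?PX)
           = ennreal (row_expectation N p u q g)"
  proof -
    have E_nonneg: "measure_pmf.expectation (bernoulli_pmf q) (\<lambda>w. g (x,d,w)) \<ge> 0" for x d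
      using g by (intro integral_nonneg_AE) auto
    have "measure_pmf.expectation ?PD (\<lambda>d. measure_pmf.expectation (bernoulli_pmf q) (\<lambda>w. g (x,d,w))) \<ge> 0" for x
      using E_nonneg by (intro integral_nonneg_AE) auto
    with E_nonneg show ?thesis
      unfolding row_expectation_def
      by (simp add: nn_integral_eq_expectation_finite_pmf finite_set_pmf_Pi_bernoulli finite_set_pmf_bernoulli g)
  qed
  finally show ?thesis by simp
qed

lemma row_expectation_prod:
  assumes p: "0 \<le> p" "p \<le> 1" and u: "0 \<le> u" "u \<le> 1" and q: "0 \<le> q" "q \<le> 1"
    and nonneg: "\<And>b. W b \<ge> 0" "\<And>k a b. c k a b \<ge> (0::real)"
  shows "row_expectation N p u q (\<lambda>(x,d,w). W w * (\<Prod>k<N. c k (x k) (d k))) =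
     (q * W True + (1 - q) * W False) *
     (\<Prod>k<N. p * ((1-u) * c k True True + u * c k True False)
             + (1-p) * ((1-u) * c k False True + u * c k False False))"
proof -
  let ?PX = "Pi_pmf {..<N} False (\<lambda>_. bernoulli_pmf p)"
  let ?PD = "Pi_pmf {..<N} False (\<lambda>_. bernoulli_pmf (1-u))"
  have inner: "measure_pmf.expectation ?PD (\<lambda>d. (q * W True + (1 - q) * W False) * (\<Prod>k<N. c k (x k) (d k)))
     = (q * W True + (1 - q) * W False) * (\<Prod>k<N. (1-u) * c k (x k) True + u * c k (x k) False)" for x
    using expectation_Pi_pmf_bernoulli_prod[of "1-u" "\<lambda>k b. c k (x k) b" N] u nonneg by simp
  have "row_expectation N p u q (\<lambda>(x,d,w). W w * (\<Prod>k<N. c k (x k) (d k))) =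
    measure_pmf.expectation ?PX (\<lambda>x. measure_pmf.expectation ?PD (\<lambda>d.
      (q * W True + (1 - q) * W False) * (\<Prod>k<N. c k (x k) (d k))))"
    unfolding row_expectation_def using q by (simp add: algebra_simps)
  also have "\<dots> = (q * W True + (1 - q) * W False) *
      measure_pmf.expectation ?PX (\<lambda>x. \<Prod>k<N. (1-u) * c k (x k) True + u * c k (x k) False)"
    unfolding inner by simp
  also have "\<dots> = (q * W True + (1 - q) * W False) *
     (\<Prod>k<N. p * ((1-u) * c k True True + u * c k True False)
             + (1-p) * ((1-u) * c k False True + u * c k False False))"
    using p u nonneg by (subst expectation_Pi_pmf_bernoulli_prod) (auto intro!: add_nonneg_nonneg)
  finally show ?thesis .
qed

definition row_positive :: "nat set \<Rightarrow> (nat \<Rightarrow> bool) \<times> (nat \<Rightarrow> bool) \<times> bool \<Rightarrow> bool" where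
  "row_positive Sd r = (case r of (x,d,w) \<Rightarrow> (\<exists>k\<in>Sd. d k \<and> x k) \<or> w)"

lemma gt_outcome_eq_row_positive: "gt_outcome Sd s l = row_positive Sd (test_row s l)"
  by (simp add: gt_outcome_def row_positive_def test_row_def split: prod.splits)

lemma of_bool_not_row_positive:
  "finite Sd \<Longrightarrow> of_bool (\<not> row_positive Sd (x,d,w)) =
     of_bool (\<not> w) * (\<Prod>k\<in>Sd. of_bool (\<not> (x k \<and> d k)) :: real)"
  by (subst prod_of_bool) (auto simp: row_positive_def)

lemma prob_le_pow_row_expectation:
  assumes g: "\<And>r. g r > 0" and A: "\<And>s. A s \<Longrightarrow> c \<le> (\<Prod>l<M. g (test_row s l))" and c: "c > 0"
    and B: "row_expectation N p u q g \<le> B"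
  shows "measure_pmf.prob (gt_pmf M N p u q) {s. A s} \<le> B ^ M / c"
proof (rule prob_le_by_Markov[where F = "\<lambda>s. \<Prod>l<M. ennreal (g (test_row s l))"])
  show "ennreal c \<le> (\<Prod>l<M. ennreal (g (test_row s l)))" if "A s" for s
    using g A[OF that] by (subst prod_ennreal) (auto simp: less_imp_le intro!: ennreal_leI)
  have E: "row_expectation N p u q g \<ge> 0" using g by (intro row_expectation_nonneg less_imp_le)
  have "(\<integral>\<^sup>+s. (\<Prod>l<M. ennreal (g (test_row s l))) \<partial>gt_pmf M N p u q) = ennreal (row_expectation N p u q g ^ M)"
    using E g by (simp add: nn_integral_prod_test_rows less_imp_le ennreal_power)
  also have "\<dots> \<le> ennreal (B ^ M)" using E B by (intro ennreal_leI power_mono) auto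
  finally show "(\<integral>\<^sup>+s. (\<Prod>l<M. ennreal (g (test_row s l))) \<partial>gt_pmf M N p u q) \<le> ennreal (c * (B ^ M / c))"
    using c by simp
  show "B ^ M / c \<ge> 0" using E B c by auto
qed (fact c)

lemma row_expectation_not_positive_prod:
  assumes p: "0 \<le> p" "p \<le> 1" and u: "0 \<le> u" "u \<le> 1" and q: "0 \<le> q" "q \<le> 1"
    and Sd: "Sd \<subseteq> {..<N}" and S: "S \<subseteq> {..<N}" "S \<inter> Sd = {}" and f: "\<And>b. f b \<ge> 0"
  shows "row_expectation N p u q (\<lambda>(x,d,w). of_bool (\<not> row_positive Sd (x,d,w)) * (\<Prod>k\<in>S. f (x k))) =
    (1-q) * (1 - (1-u)*p) ^ card Sd * (p * f True + (1-p) * f False) ^ card S"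
proof -
  define c :: "nat \<Rightarrow> bool \<Rightarrow> bool \<Rightarrow> real" where
    "c k a b = (if k \<in> Sd then of_bool (\<not> (a \<and> b)) else if k \<in> S then f a else 1)" for k a b
  have "(\<Prod>k<N. c k (x k) (d k)) = (\<Prod>k\<in>Sd. of_bool (\<not> (x k \<and> d k))) * (\<Prod>k\<in>S. f (x k))" for x d
    unfolding c_def using Sd S by (intro prod_if_disjoint) auto
  moreover have "finite Sd" using Sd finite_subset by blast
  ultimately have "of_bool (\<not> row_positive Sd (x,d,w)) * (\<Prod>k\<in>S. f (x k)) = of_bool (\<not> w) * (\<Prod>k<N. c k (x k) (d k))"
    for x d w
    by (simp only: of_bool_not_row_positive mult.assoc)
  hence "row_expectation N p u q (\<lambda>(x,d,w). of_bool (\<not> row_positive Sd (x,d,w)) * (\<Prod>k\<in>S. f (x k))) =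
      row_expectation N p u q (\<lambda>(x,d,w). of_bool (\<not> w) * (\<Prod>k<N. c k (x k) (d k)))"
    by simp
  also have "\<dots> = (1-q) * (\<Prod>k<N. if k \<in> Sd then 1 - (1-u)*p
                                   else if k \<in> S then p * f True + (1-p) * f False else 1)"
  proof -
    have "p * ((1-u) * c k True True + u * c k True False) + (1-p) * ((1-u) * c k False True + u * c k False False)
        = (if k \<in> Sd then 1 - (1-u)*p else if k \<in> S then p * f True + (1-p) * f False else 1)" for k
      by (simp add: c_def algebra_simps)
    moreover have "c k a b \<ge> 0" for k a b using f by (simp add: c_def)
    ultimately show ?thesis using p u q by (subst row_expectation_prod) simp_all
  qed
  also have "\<dots> = (1-q) * (1 - (1-u)*p) ^ card Sd * (p * f True + (1-p) * f False) ^ card S"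
    using Sd S by (simp add: prod_if_disjoint Int_commute)
  finally show ?thesis .
qed

lemma row_expectation_not_positive:
  assumes "0 \<le> p" "p \<le> 1" "0 \<le> u" "u \<le> 1" "0 \<le> q" "q \<le> 1" and "Sd \<subseteq> {..<N}"
  shows "row_expectation N p u q (\<lambda>(x,d,w). of_bool (\<not> row_positive Sd (x,d,w))) = (1-q) * (1 - (1-u)*p) ^ card Sd"
  using row_expectation_not_positive_prod[OF assms, of "{}" "\<lambda>_. 1"] by simp

lemma row_expectation_prod_items:
  assumes p: "0 \<le> p" "p \<le> 1" and u: "0 \<le> u" "u \<le> 1" and q: "0 \<le> q" "q \<le> 1"
    and S: "S \<subseteq> {..<N}" and f: "\<And>b. f b \<ge> 0"
  shows "row_expectation N p u q (\<lambda>(x,d,w). \<Prod>k\<in>S. f (x k)) = (p * f True + (1-p) * f False) ^ card S"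
proof -
  define c :: "nat \<Rightarrow> bool \<Rightarrow> bool \<Rightarrow> real" where "c k a b = (if k \<in> S then f a else 1)" for k a b
  have "(\<Prod>k\<in>S. f (x k)) = 1 * (\<Prod>k<N. c k (x k) (d k))" for x d
    using S prod.inter_restrict[of "{..<N}" "\<lambda>k. f (x k)" S] by (simp add: c_def Int_absorb1)
  hence "row_expectation N p u q (\<lambda>(x,d,w). \<Prod>k\<in>S. f (x k)) =
      row_expectation N p u q (\<lambda>(x,d,w). (\<lambda>_. 1) w * (\<Prod>k<N. c k (x k) (d k)))"
    by simp
  also have "\<dots> = (\<Prod>k<N. if k \<in> S then p * f True + (1-p) * f False else 1)"
  proof -
    have "p * ((1-u) * c k True True + u * c k True False) + (1-p) * ((1-u) * c k False True + u * c k False False)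
        = (if k \<in> S then p * f True + (1-p) * f False else 1)" for k
      by (simp add: c_def algebra_simps)
    moreover have "c k a b \<ge> 0" for k a b using f by (simp add: c_def)
    ultimately show ?thesis using p u q by (subst row_expectation_prod) simp_all
  qed
  also have "\<dots> = (p * f True + (1-p) * f False) ^ card S"
    using S prod.inter_restrict[of "{..<N}" "\<lambda>_. p * f True + (1-p) * f False" S] by (simp add: Int_absorb1)
  finally show ?thesis .
qed

lemma row_expectation_item:
  assumes "0 \<le> p" "p \<le> 1" "0 \<le> u" "u \<le> 1" "0 \<le> q" "q \<le> 1" and "j < N"
  shows "row_expectation N p u q (\<lambda>(x,d,w). of_bool (x j)) = p"
  using row_expectation_prod_items[OF assms(1-6), of "{j}" N of_bool] assms(7) by simp

lemma row_expectation_item_not_positive: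
  assumes p: "0 \<le> p" "p \<le> 1" and u: "0 \<le> u" "u \<le> 1" and q: "0 \<le> q" "q \<le> 1"
    and Sd: "Sd \<subseteq> {..<N}" and j: "j \<in> Sd"
  shows "row_expectation N p u q (\<lambda>(x,d,w). of_bool (x j) * of_bool (\<not> row_positive Sd (x,d,w))) =
    (1-q) * (1 - (1-u)*p) ^ (card Sd - 1) * (p * u)"
proof -
  define c :: "nat \<Rightarrow> bool \<Rightarrow> bool \<Rightarrow> real" where
    "c k a b = (if k \<in> Sd - {j} then of_bool (\<not> (a \<and> b)) else if k \<in> {j} then of_bool (a \<and> \<not> b) else 1)"
    for k a b
  have fin: "finite (Sd - {j})" using Sd finite_subset by blast
  have "(\<Prod>k<N. c k (x k) (d k)) = (\<Prod>k\<in>Sd - {j}. of_bool (\<not> (x k \<and> d k))) * of_bool (x j \<and> \<not> d j)" for x d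
    unfolding c_def using Sd j by (subst prod_if_disjoint) auto
  moreover have "of_bool (x j) * of_bool (\<not> row_positive Sd (x,d,w)) =
      of_bool (\<not> w) * ((\<Prod>k\<in>Sd - {j}. of_bool (\<not> (x k \<and> d k))) * of_bool (x j \<and> \<not> d j) :: real)" for x d w
    using j fin by (simp only: prod_of_bool) (auto simp: row_positive_def)
  ultimately have "of_bool (x j) * of_bool (\<not> row_positive Sd (x,d,w)) = of_bool (\<not> w) * (\<Prod>k<N. c k (x k) (d k))"
    for x d w
    by simp
  hence "row_expectation N p u q (\<lambda>(x,d,w). of_bool (x j) * of_bool (\<not> row_positive Sd (x,d,w))) =
      row_expectation N p u q (\<lambda>(x,d,w). of_bool (\<not> w) * (\<Prod>k<N. c k (x k) (d k)))"
    by simp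
  also have "\<dots> = (1-q) * (\<Prod>k<N. if k \<in> Sd - {j} then 1 - (1-u)*p else if k \<in> {j} then p * u else 1)"
  proof -
    have "p * ((1-u) * c k True True + u * c k True False) + (1-p) * ((1-u) * c k False True + u * c k False False)
        = (if k \<in> Sd - {j} then 1 - (1-u)*p else if k \<in> {j} then p * u else 1)" for k
      by (simp add: c_def algebra_simps)
    moreover have "c k a b \<ge> 0" for k a b by (simp add: c_def)
    ultimately show ?thesis using p u q by (subst row_expectation_prod) simp_all
  qed
  also have "\<dots> = (1-q) * (1 - (1-u)*p) ^ (card Sd - 1) * (p * u)"
    using Sd j by (subst prod_if_disjoint) auto
  finally show ?thesis .
qed

section \<open>Tail bounds for the scores\<close>

definition row_reward :: "real \<Rightarrow> nat set \<Rightarrow> (nat \<Rightarrow> bool) \<times> (nat \<Rightarrow> bool) \<times> bool \<Rightarrow> real" where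
  "row_reward \<psi> Sd r = (if row_positive Sd r then -\<psi> else 1)"

lemma coal_score_eq_sum:
  "coal_score \<psi> M Sd s k = (\<Sum>l<M. of_bool (fst s (l,k)) * row_reward \<psi> Sd (test_row s l))"
proof -
  have card_eq: "real (card {l \<in> {..<M}. P l}) = (\<Sum>l<M. of_bool (P l))" for P
    by (simp add: Int_def)
  show ?thesis
    unfolding coal_score_def card_eq sum_distrib_left sum_subtractf[symmetric]
    by (intro sum.cong refl) (auto simp: row_reward_def gt_outcome_eq_row_positive)
qed

lemma roal_score_eq_coal_score: "roal_score M Sd s = coal_score 0 M Sd s"
  by (simp add: fun_eq_iff roal_score_def coal_score_def)

lemma exp_coal_score:
  "exp (a * coal_score \<psi> M Sd s k) =
     (\<Prod>l<M. exp (a * of_bool (fst (test_row s l) k) * row_reward \<psi> Sd (test_row s l)))"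
proof -
  have "a * coal_score \<psi> M Sd s k = (\<Sum>l<M. a * of_bool (fst (test_row s l) k) * row_reward \<psi> Sd (test_row s l))"
    unfolding coal_score_eq_sum sum_distrib_left by (simp add: test_row_def mult.assoc)
  thus ?thesis by (simp add: exp_sum)
qed

lemma prob_defective_score_ge:
  assumes p: "0 \<le> p" "p \<le> 1" and u: "0 \<le> u" "u \<le> 1" and q: "0 \<le> q" "q \<le> 1"
    and Sd: "Sd \<subseteq> {..<N}" and j: "j \<in> Sd" and lm: "lm \<ge> 0"
  defines "\<rho> \<equiv> (1-q) * (1 - (1-u)*p) ^ (card Sd - 1) * u"
  shows "measure_pmf.prob (gt_pmf M N p u q) {s. t \<le> coal_score \<psi> M Sd s j} \<le>
     (1 + p * (\<rho> * exp lm + (1 - \<rho>) * exp (-lm*\<psi>) - 1)) ^ M / exp (lm * t)"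
proof (rule prob_le_pow_row_expectation[where g = "\<lambda>r. exp (lm * of_bool (fst r j) * row_reward \<psi> Sd r)"])
  show "exp (lm * t) \<le> (\<Prod>l<M. exp (lm * of_bool (fst (test_row s l) j) * row_reward \<psi> Sd (test_row s l)))"
    if "t \<le> coal_score \<psi> M Sd s j" for s
    using lm that by (simp add: exp_coal_score[symmetric] mult_left_mono)
  have split: "exp (lm * of_bool (fst r j) * row_reward \<psi> Sd r) =
      1 + (exp (-lm*\<psi>) - 1) * (case r of (x,d,w) \<Rightarrow> of_bool (x j))
        + (exp lm - exp (-lm*\<psi>)) * (case r of (x,d,w) \<Rightarrow> of_bool (x j) * of_bool (\<not> row_positive Sd (x,d,w)))"
    for r
    by (cases r) (auto simp: row_reward_def)
  have "j < N" using Sd j by auto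
  show "row_expectation N p u q (\<lambda>r. exp (lm * of_bool (fst r j) * row_reward \<psi> Sd r))
      \<le> 1 + p * (\<rho> * exp lm + (1 - \<rho>) * exp (-lm*\<psi>) - 1)"
    unfolding split row_expectation_add row_expectation_cmult row_expectation_const
      row_expectation_item_not_positive[OF p u q Sd j] row_expectation_item[OF p u q \<open>j < N\<close>]
    by (simp add: \<rho>_def algebra_simps)
qed auto

text \<open>Conditional moment generating function of the negated score increment of a
  non-defective item given the test row: such an item enters the test with probability p,
  independently of the outcome.\<close>

definition item_mgf :: "real \<Rightarrow> real \<Rightarrow> real \<Rightarrow> nat set \<Rightarrow> (nat \<Rightarrow> bool) \<times> (nat \<Rightarrow> bool) \<times> bool \<Rightarrow> real" where
  "item_mgf lm \<psi> p Sd r = 1 - p + p * exp (-lm * row_reward \<psi> Sd r)"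

lemma item_mgf_pos: "0 \<le> p \<Longrightarrow> p \<le> 1 \<Longrightarrow> item_mgf lm \<psi> p Sd r > 0"
  unfolding item_mgf_def by (cases "p = 0") (auto intro!: add_nonneg_pos)

lemma prob_item_mgf_prod_gt:
  assumes p: "0 \<le> p" "p \<le> 1" and u: "0 \<le> u" "u \<le> 1" and q: "0 \<le> q" "q \<le> 1"
    and Sd: "Sd \<subseteq> {..<N}" and c: "c > 0"
  defines "\<rho> \<equiv> (1-q) * (1 - (1-u)*p) ^ card Sd"
  shows "measure_pmf.prob (gt_pmf M N p u q) {s. c < (\<Prod>l<M. item_mgf lm \<psi> p Sd (test_row s l))} \<le>
     (1 + p * (\<rho> * exp (-lm) + (1 - \<rho>) * exp (lm*\<psi>) - 1)) ^ M / c"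
proof (rule prob_le_pow_row_expectation[where g = "item_mgf lm \<psi> p Sd"])
  have split: "item_mgf lm \<psi> p Sd r = (1 - p + p * exp (lm*\<psi>)) + p * (exp (-lm) - exp (lm*\<psi>)) *
      (case r of (x,d,w) \<Rightarrow> of_bool (\<not> row_positive Sd (x,d,w)))" for r
    by (cases r) (auto simp: item_mgf_def row_reward_def algebra_simps)
  show "row_expectation N p u q (item_mgf lm \<psi> p Sd) \<le> 1 + p * (\<rho> * exp (-lm) + (1 - \<rho>) * exp (lm*\<psi>) - 1)"
    unfolding split row_expectation_add row_expectation_cmult row_expectation_const
    by (subst row_expectation_not_positive[OF p u q Sd]) (simp add: \<rho>_def algebra_simps)
qed (auto simp: item_mgf_pos p c less_imp_le)

text \<open>The scores of non-defective items are dependent through the common test outcomes.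
  After division by item_mgf the row factor below has expectation one whatever the outcome,
  so the outcomes only enter through the product of the item_mgf values, which is controlled
  separately by the previous lemma.\<close>

lemma row_expectation_normalized_item_factors:
  assumes p: "0 \<le> p" "p \<le> 1" and u: "0 \<le> u" "u \<le> 1" and q: "0 \<le> q" "q \<le> 1"
    and Sd: "Sd \<subseteq> {..<N}" and S: "S \<subseteq> {..<N}" "S \<inter> Sd = {}"
  shows "row_expectation N p u q (\<lambda>r. (\<Prod>k\<in>S. exp (-lm * of_bool (fst r k) * row_reward \<psi> Sd r))
                                        / item_mgf lm \<psi> p Sd r ^ card S) = 1"
proof -
  define h1 where "h1 = 1 - p + p * exp (-lm)"
  define h2 where "h2 = 1 - p + p * exp (lm * \<psi>)"
  define f1 where "f1 b = exp (-lm * of_bool b)" for b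
  define f2 where "f2 b = exp (lm * \<psi> * of_bool b)" for b
  have "h1 > 0" "h2 > 0"
    using item_mgf_pos[OF p, of lm 1 "{}" "(\<lambda>_. False, \<lambda>_. False, False)"]
      item_mgf_pos[OF p, of lm \<psi> "{}" "(\<lambda>_. False, \<lambda>_. False, True)"]
    by (simp_all add: h1_def h2_def item_mgf_def row_reward_def row_positive_def)
  have f_nonneg: "\<And>b. f1 b \<ge> 0" "\<And>b. f2 b \<ge> 0" by (simp_all add: f1_def f2_def)
  have split: "(\<Prod>k\<in>S. exp (-lm * of_bool (fst r k) * row_reward \<psi> Sd r)) / item_mgf lm \<psi> p Sd r ^ card S
     = (1 / h1 ^ card S) * (case r of (x,d,w) \<Rightarrow> of_bool (\<not> row_positive Sd (x,d,w)) * (\<Prod>k\<in>S. f1 (x k)))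
       + ((1 / h2 ^ card S) * (case r of (x,d,w) \<Rightarrow> \<Prod>k\<in>S. f2 (x k))
       - (1 / h2 ^ card S) * (case r of (x,d,w) \<Rightarrow> of_bool (\<not> row_positive Sd (x,d,w)) * (\<Prod>k\<in>S. f2 (x k))))"
    for r
    by (cases r) (auto simp: item_mgf_def row_reward_def f1_def f2_def h1_def h2_def mult_ac)
  have "row_expectation N p u q (\<lambda>r. (\<Prod>k\<in>S. exp (-lm * of_bool (fst r k) * row_reward \<psi> Sd r))
                                        / item_mgf lm \<psi> p Sd r ^ card S) =
     (1 / h1 ^ card S) * ((1-q) * (1 - (1-u)*p) ^ card Sd * (p * f1 True + (1-p) * f1 False) ^ card S)
     + ((1 / h2 ^ card S) * (p * f2 True + (1-p) * f2 False) ^ card S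
     - (1 / h2 ^ card S) * ((1-q) * (1 - (1-u)*p) ^ card Sd * (p * f2 True + (1-p) * f2 False) ^ card S))"
    unfolding split row_expectation_add row_expectation_diff row_expectation_cmult
    by (subst row_expectation_not_positive_prod[OF p u q Sd S f_nonneg(1)]
        row_expectation_not_positive_prod[OF p u q Sd S f_nonneg(2)]
        row_expectation_prod_items[OF p u q S(1) f_nonneg(2)])+ (rule refl)
  also have "\<dots> = 1"
    using \<open>h1 > 0\<close> \<open>h2 > 0\<close> by (simp add: f1_def f2_def h1_def h2_def algebra_simps)
  finally show ?thesis .
qed

lemma prob_nondefective_scores_le:
  assumes p: "0 \<le> p" "p \<le> 1" and u: "0 \<le> u" "u \<le> 1" and q: "0 \<le> q" "q \<le> 1"
    and Sd: "Sd \<subseteq> {..<N}" and S: "S \<subseteq> {..<N}" "S \<inter> Sd = {}" and c: "c > 0" and lm: "lm \<ge> 0"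
  shows "measure_pmf.prob (gt_pmf M N p u q)
      {s. (\<forall>k\<in>S. coal_score \<psi> M Sd s k \<le> t) \<and> (\<Prod>l<M. item_mgf lm \<psi> p Sd (test_row s l)) \<le> c}
     \<le> c ^ card S / exp (-lm * card S * t)"
proof -
  define g where "g r = (\<Prod>k\<in>S. exp (-lm * of_bool (fst r k) * row_reward \<psi> Sd r)) / item_mgf lm \<psi> p Sd r ^ card S"
    for r
  have "measure_pmf.prob (gt_pmf M N p u q)
      {s. (\<forall>k\<in>S. coal_score \<psi> M Sd s k \<le> t) \<and> (\<Prod>l<M. item_mgf lm \<psi> p Sd (test_row s l)) \<le> c}
     \<le> 1 ^ M / (exp (-lm * card S * t) / c ^ card S)"
  proof (rule prob_le_pow_row_expectation[where g = g])
    show "0 < g r" for r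
      using item_mgf_pos[OF p] by (simp add: g_def prod_pos)
    show "0 < exp (-lm * card S * t) / c ^ card S" using c by simp
    show "row_expectation N p u q g \<le> 1"
      using row_expectation_normalized_item_factors[OF p u q Sd S] by (simp add: g_def[abs_def])
    show "exp (-lm * card S * t) / c ^ card S \<le> (\<Prod>l<M. g (test_row s l))"
      if ev: "(\<forall>k\<in>S. coal_score \<psi> M Sd s k \<le> t) \<and> (\<Prod>l<M. item_mgf lm \<psi> p Sd (test_row s l)) \<le> c" for s
    proof -
      have fS: "finite S" using S finite_subset by blast
      have "(\<Prod>l<M. g (test_row s l)) = (\<Prod>k\<in>S. exp (-lm * coal_score \<psi> M Sd s k))
           / (\<Prod>l<M. item_mgf lm \<psi> p Sd (test_row s l)) ^ card S"
        unfolding exp_coal_score g_def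
        by (simp add: prod_dividef prod.swap[of _ S] prod_power_distrib)
      also have "(\<Prod>k\<in>S. exp (-lm * coal_score \<psi> M Sd s k)) = exp (-lm * (\<Sum>k\<in>S. coal_score \<psi> M Sd s k))"
        using fS by (simp add: exp_sum sum_distrib_left)
      also have "exp (-lm * card S * t) \<le> \<dots>"
        using ev lm mult_left_mono[OF sum_mono[of S "\<lambda>k. coal_score \<psi> M Sd s k" "\<lambda>_. t"] lm]
        by (simp add: mult.assoc)
      moreover have "(\<Prod>l<M. item_mgf lm \<psi> p Sd (test_row s l)) > 0"
        by (intro prod_pos ballI item_mgf_pos p)
      ultimately show ?thesis using ev c by (auto intro!: frac_le power_mono)
    qed
  qed
  then show ?thesis by simp
qed

lemma not_alg_succeeds_imp_low_scoring_subset: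
  fixes f :: "nat \<Rightarrow> real"
  assumes fail: "\<not> alg_succeeds N L Sd f" and low: "\<forall>j\<in>Sd. f j < t"
    and Sd: "Sd \<subseteq> {..<N}" and L: "1 \<le> L"
  shows "\<exists>S. S \<subseteq> {..<N} - Sd \<and> card S = (N - card Sd) - (L - 1) \<and> (\<forall>k\<in>S. f k \<le> t)"
proof -
  from fail obtain T d where T: "T \<in> top_sets N L f" and d: "d \<in> T" "d \<in> Sd"
    unfolding alg_succeeds_def by auto
  from T have TN: "T \<subseteq> {..<N}" and cT: "card T = L" and top: "\<forall>a\<in>T. \<forall>b\<in>{..<N} - T. f b \<le> f a"
    unfolding top_sets_def by auto
  have "finite T" using TN finite_subset by blast
  have "card (({..<N} - Sd) \<inter> T) \<le> L - 1"
    using card_mono[of "T - {d}" "({..<N} - Sd) \<inter> T"] \<open>finite T\<close> cT d by (auto simp: card_Diff_singleton)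
  moreover have "card ({..<N} - Sd) = N - card Sd"
    using Sd by (simp add: card_Diff_subset finite_subset)
  moreover have "card (({..<N} - Sd) - T) = card ({..<N} - Sd) - card (({..<N} - Sd) \<inter> T)"
    by (metis card_Diff_subset_Int finite_Diff finite_Int finite_lessThan)
  ultimately have "(N - card Sd) - (L - 1) \<le> card (({..<N} - Sd) - T)" by linarith
  then obtain S where S: "S \<subseteq> ({..<N} - Sd) - T" "card S = (N - card Sd) - (L - 1)"
    by (meson obtain_subset_with_card_n)
  have "f k \<le> t" if "k \<in> S" for k
  proof -
    have "f k \<le> f d" using top S d that by auto
    thus ?thesis using low d by fastforce
  qed
  thus ?thesis using S by blast
qed

lemma exp_le_quadratic:
  fixes x :: real assumes "x \<le> 1" shows "exp x \<le> 1 + x + x^2"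
proof (cases "x \<ge> 0")
  case True
  thus ?thesis using exp_bound assms by simp
next
  case False
  have "exp x * (1 - x) \<le> exp x * exp (-x)"
    using exp_ge_add_one_self[of "-x"] by (intro mult_left_mono) auto
  hence "exp x * (1 - x) \<le> 1" by (simp add: exp_minus)
  moreover have "1 \<le> (1 + x + x^2) * (1 - x)"
  proof -
    have "x * (x * x) \<le> 0" using False by (simp add: mult_nonpos_nonneg)
    thus ?thesis by (simp add: algebra_simps power2_eq_square)
  qed
  ultimately have "exp x * (1 - x) \<le> (1 + x + x^2) * (1 - x)" by linarith
  thus ?thesis using False by (auto dest: mult_right_le_imp_le)
qed

lemma convex_comb_exp_le:
  fixes \<rho> a b :: real
  assumes "0 \<le> \<rho>" "\<rho> \<le> 1" "a \<le> 1" "b \<le> 1"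
  shows "\<rho> * exp a + (1 - \<rho>) * exp b - 1 \<le> (\<rho> * a + (1 - \<rho>) * b) + (a^2 + b^2)"
proof -
  have "\<rho> * exp a \<le> \<rho> * (1 + a + a^2)" "(1 - \<rho>) * exp b \<le> (1 - \<rho>) * (1 + b + b^2)"
    using assms exp_le_quadratic by (auto intro!: mult_left_mono)
  moreover have "\<rho> * a^2 \<le> a^2" "(1 - \<rho>) * b^2 \<le> b^2"
    using assms by (auto intro!: mult_left_le_one_le)
  ultimately show ?thesis by (simp add: algebra_simps)
qed

lemma power_le_exp_mult:
  fixes y :: real assumes "-1 \<le> y" shows "(1 + y) ^ M \<le> exp (real M * y)"
proof -
  have "(1 + y) ^ M \<le> exp y ^ M"
    using assms exp_ge_add_one_self[of y] by (intro power_mono) (auto simp: add.commute)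
  thus ?thesis by (simp add: exp_of_nat_mult)
qed

lemma power_mult_exp_le:
  fixes p \<phi> a \<kappa> :: real
  assumes "0 \<le> p" "p \<le> 1" "-1 \<le> \<phi>" "\<phi> + a \<le> -\<kappa>"
  shows "(1 + p * \<phi>) ^ M * exp (real M * p * a) \<le> exp (-\<kappa> * (real M * p))"
proof -
  have "-1 \<le> p * \<phi>"
    using assms mult_left_mono[of "-1" \<phi> p] by simp
  hence "(1 + p * \<phi>) ^ M * exp (real M * p * a) \<le> exp (real M * (p * \<phi>)) * exp (real M * p * a)"
    by (intro mult_right_mono power_le_exp_mult) auto
  also have "\<dots> = exp (real M * p * (\<phi> + a))" by (simp add: exp_add[symmetric] algebra_simps)
  also have "\<dots> \<le> exp (-\<kappa> * (real M * p))"
    using assms mult_left_mono[of "\<phi> + a" "-\<kappa>" "real M * p"] by (simp add: mult.commute)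
  finally show ?thesis .
qed

lemma exp_minus_one_le_power:
  assumes K: "2 \<le> K" shows "exp (-1) \<le> (1 - 1 / real K) ^ (K - 1)"
proof -
  define n where "n = K - 1"
  have n: "n \<ge> 1" "real K = real n + 1" using K by (auto simp: n_def)
  have "(1 + 1 / real n) ^ n \<le> exp (real n * (1 / real n))" by (rule power_le_exp_mult) (simp add: order_trans[of _ 0])
  also have "\<dots> = exp 1" using n by simp
  moreover have "(1 + 1 / real n) ^ n > 0" by (simp add: add_pos_nonneg)
  ultimately have "exp (-1) \<le> 1 / (1 + 1 / real n) ^ n"
    by (simp add: exp_minus inverse_eq_divide divide_left_mono)
  also have "\<dots> = (1 - 1 / real K) ^ n"
  proof -
    have "1 - 1 / real K = 1 / (1 + 1 / real n)" using n by (simp add: field_simps)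
    thus ?thesis by (simp add: power_divide)
  qed
  finally show ?thesis by (simp add: n_def)
qed

lemma exp_minus_add_mult_ln:
  fixes a c :: real assumes "0 < a"
  shows "exp (- (c + real n) * ln a) = exp (- c * ln a) / a ^ n"
  using assms by (simp add: algebra_simps exp_diff exp_of_nat_mult)

lemma tail_sum_lt:
  fixes K C :: nat and c x y :: real
  assumes K: "2 \<le> K" and C: "1 \<le> C"
    and x: "(c + 3) * ln (real K) \<le> x" and y: "(c + 2) * ln (real K * real C) \<le> y"
  shows "(1 + real K) * exp (- x) + real C * exp (- y)
     < exp (- c * ln (real K * real C)) + exp (- c * ln (real K))"
proof -
  define a b where "a = exp (- c * ln (real K))" and "b = exp (- c * ln (real K * real C))"
  have Kr: "real K \<ge> 2" and Cr: "real C \<ge> 1" using K C by simp_all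
  have KC: "real K * real C \<ge> 2" using Kr Cr mult_mono[of 2 "real K" 1 "real C"] by simp
  have pos: "0 < real K" "0 < real K * real C" using Kr KC by simp_all
  have "exp (- x) \<le> exp (- (c + 3) * ln (real K))" using x by (subst exp_le_cancel_iff) linarith
  also have "\<dots> = a / real K ^ 3"
    using exp_minus_add_mult_ln[OF pos(1), of c 3] by (simp only: of_nat_numeral a_def)
  finally have "(1 + real K) * exp (- x) \<le> (1 + real K) * (a / real K ^ 3)"
    by (rule mult_left_mono) (use Kr in simp)
  also have "\<dots> = a * ((1 + real K) / real K ^ 3)" by simp
  also have "\<dots> \<le> a * (1 / 2)"
  proof -
    have "2 * (1 + real K) \<le> real K * 4" using Kr by simp
    also have "\<dots> \<le> real K * (real K * real K)"
      using Kr mult_mono[of 2 "real K" 2 "real K"] by (intro mult_left_mono) auto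
    finally have "2 * (1 + real K) \<le> real K * (real K * real K)" .
    hence "(1 + real K) / real K ^ 3 \<le> 1 / 2" using Kr by (simp add: field_simps power3_eq_cube)
    thus ?thesis by (rule mult_left_mono) (simp add: a_def)
  qed
  finally have A: "(1 + real K) * exp (- x) \<le> a / 2" by simp
  have "exp (- y) \<le> exp (- (c + 2) * ln (real K * real C))" using y by (subst exp_le_cancel_iff) linarith
  also have "\<dots> = b / (real K * real C) ^ 2"
    using exp_minus_add_mult_ln[OF pos(2), of c 2] by (simp only: of_nat_numeral b_def)
  finally have "real C * exp (- y) \<le> real C * (b / (real K * real C) ^ 2)"
    by (rule mult_left_mono) simp
  also have "\<dots> = b * (real C / (real K * real C) ^ 2)" by simp
  also have "\<dots> \<le> b * (1 / 2)"
  proof -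
    have "2 * real C \<le> (real K * real C) ^ 2"
      using KC Kr Cr mult_mono[of 2 "real K * real C" "real C" "real K * real C"] by (simp add: power2_eq_square)
    moreover have "0 < (real K * real C) ^ 2" using pos(2) by (rule zero_less_power)
    ultimately have "real C / (real K * real C) ^ 2 \<le> 1 / 2" by (simp add: pos_divide_le_eq mult.commute)
    thus ?thesis by (rule mult_left_mono) (simp add: b_def)
  qed
  finally have B: "real C * exp (- y) \<le> b / 2" by simp
  have "a > 0" "b > 0" by (simp_all add: a_def b_def)
  thus ?thesis using A B unfolding a_def b_def by linarith
qed

section \<open>The Chernoff argument\<close>

text \<open>Both choices of the CoAl parameter lie in [0, psi_max u], and gap_min u bounds from
  below, uniformly in K \<ge> 2 and q < 1/2, the gap between the mean score increments of
  non-defective and defective items.\<close>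

definition psi_max :: "real \<Rightarrow> real" where "psi_max u = 2*u / (1 - 2*u)"

definition gap_min :: "real \<Rightarrow> real" where "gap_min u = (1/2 - u) / (2 * exp 1)"

definition chernoff_lambda :: "real \<Rightarrow> real" where
  "chernoff_lambda u = min (1 / (1 + psi_max u)) (gap_min u / (8 * (1 + psi_max u ^ 2)))"

definition chernoff_rate :: "real \<Rightarrow> real" where
  "chernoff_rate u = chernoff_lambda u * gap_min u / 8"

lemma chernoff_constants:
  assumes "0 \<le> u" "u < 1/2"
  shows "psi_max u \<ge> 0" "gap_min u > 0" "chernoff_lambda u > 0" "chernoff_lambda u \<le> 1"
    "chernoff_rate u > 0" "chernoff_lambda u * psi_max u \<le> 1"
    "chernoff_lambda u * (1 + psi_max u ^ 2) \<le> gap_min u / 8"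
proof -
  show psi: "psi_max u \<ge> 0" using assms by (simp add: psi_max_def)
  show gap: "gap_min u > 0" using assms by (simp add: gap_min_def)
  have R: "1 + psi_max u ^ 2 > 0" by (simp add: add_pos_nonneg)
  show lam: "chernoff_lambda u > 0" using psi gap R by (simp add: chernoff_lambda_def)
  show "chernoff_lambda u \<le> 1" using psi by (simp add: chernoff_lambda_def min.coboundedI1)
  show "chernoff_rate u > 0" using lam gap by (simp add: chernoff_rate_def)
  have "chernoff_lambda u * psi_max u \<le> 1 / (1 + psi_max u) * psi_max u"
    using psi by (intro mult_right_mono) (auto simp: chernoff_lambda_def)
  also have "\<dots> \<le> 1" using psi by (simp add: field_simps)
  finally show "chernoff_lambda u * psi_max u \<le> 1" .
  have "chernoff_lambda u * (1 + psi_max u ^ 2) \<le> gap_min u / (8 * (1 + psi_max u ^ 2)) * (1 + psi_max u ^ 2)"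
    using R by (intro mult_right_mono) (auto simp: chernoff_lambda_def)
  also have "\<dots> = gap_min u / 8" using R by (simp add: field_simps)
  finally show "chernoff_lambda u * (1 + psi_max u ^ 2) \<le> gap_min u / 8" .
qed

locale noisy_group_testing =
  fixes u q \<psi> :: real and N K :: nat and Sd :: "nat set"
  assumes u: "0 \<le> u" "u < 1/2" and q: "0 \<le> q" "q < 1/2" and \<psi>: "0 \<le> \<psi>" "\<psi> \<le> psi_max u"
    and Sd: "Sd \<subseteq> {..<N}" "card Sd = K" and K: "2 \<le> K"
begin

definition p :: real where "p = 1 / ((1 - u) * real K)"

text \<open>rho_neg is the probability that a test is negative, and rho_def the probability that
  it is negative given that a fixed defective item is in it.  A test containing an item
  contributes 1 to the item's score if negative and -\<psi> otherwise, hence on average drift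
  rho_neg for a non-defective and drift rho_def for a defective item.\<close>

definition rho_neg :: real where "rho_neg = (1 - q) * (1 - (1 - u) * p) ^ K"

definition rho_def :: real where "rho_def = (1 - q) * (1 - (1 - u) * p) ^ (K - 1) * u"

definition drift :: "real \<Rightarrow> real" where "drift \<rho> = \<rho> - (1 - \<rho>) * \<psi>"

definition gap :: real where "gap = drift rho_neg - drift rho_def"

definition threshold :: real where "threshold = drift rho_def + gap / 2"

abbreviation lam :: real where "lam \<equiv> chernoff_lambda u"

abbreviation rate :: real where "rate \<equiv> chernoff_rate u"

definition level :: "nat \<Rightarrow> real" where "level M = exp (- (real M * p * (lam * (threshold + gap / 4))))"

lemma probabilities: "0 \<le> u" "u \<le> 1" "0 \<le> q" "q \<le> 1"
  using u q by simp_all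

lemma p_bounds: "0 \<le> p" "p \<le> 1" and u_p: "(1 - u) * p = 1 / real K"
proof -
  have Kr: "real K \<ge> 2" using K by simp
  show "0 \<le> p" using u Kr by (simp add: p_def)
  have "(1/2) * 2 \<le> (1 - u) * real K" using u Kr by (intro mult_mono) auto
  thus "p \<le> 1" by (simp add: p_def)
  show "(1 - u) * p = 1 / real K" using u Kr by (simp add: p_def)
qed

lemma beta_bounds: "1/2 \<le> 1 - (1 - u) * p" "1 - (1 - u) * p \<le> 1"
  using K by (auto simp: u_p field_simps)

lemma rho_bounds: "0 \<le> rho_neg" "rho_neg \<le> 1" "0 \<le> rho_def" "rho_def \<le> 1"
proof -
  have "(1 - q) * (1 - (1 - u) * p) ^ K \<le> 1 * 1"
    using q beta_bounds by (intro mult_mono) (auto simp: power_le_one)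
  thus "0 \<le> rho_neg" "rho_neg \<le> 1" using q beta_bounds by (simp_all add: rho_neg_def)
  have "(1 - q) * (1 - (1 - u) * p) ^ (K - 1) * u \<le> 1 * 1 * 1"
    using q u beta_bounds by (intro mult_mono) (auto simp: power_le_one)
  thus "0 \<le> rho_def" "rho_def \<le> 1" using q u beta_bounds by (simp_all add: rho_def_def)
qed

lemma gap_ge_gap_min: "gap \<ge> gap_min u"
proof -
  define \<beta> where "\<beta> = 1 - (1 - u) * p"
  have \<beta>: "\<beta> = 1 - 1 / real K" "1/2 \<le> \<beta>" "\<beta> \<le> 1"
    using beta_bounds by (simp_all add: \<beta>_def u_p)
  have "\<beta> ^ K = \<beta> * \<beta> ^ (K - 1)" using K by (simp add: power_eq_if)
  hence diff: "rho_neg - rho_def = (1 - q) * \<beta> ^ (K - 1) * (\<beta> - u)"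
    unfolding rho_neg_def rho_def_def \<beta>_def[symmetric] by (simp add: algebra_simps)
  have "gap_min u = (1/2) * exp (-1) * (1/2 - u)" by (simp add: gap_min_def exp_minus field_simps)
  also have "\<dots> \<le> (1 - q) * \<beta> ^ (K - 1) * (\<beta> - u)"
    using exp_minus_one_le_power[OF K] q u \<beta> by (intro mult_mono) auto
  also have "\<dots> \<le> (1 + \<psi>) * (rho_neg - rho_def)"
    using diff \<psi> \<beta> q u mult_left_mono[of 1 "1 + \<psi>" "rho_neg - rho_def"] by simp
  also have "\<dots> = gap" by (simp add: gap_def drift_def algebra_simps)
  finally show ?thesis .
qed

lemma lam_bounds:
  "0 < lam" "lam \<le> 1" "0 \<le> lam * \<psi>" "lam * \<psi> \<le> 1" "lam * (1 + \<psi>^2) \<le> gap_min u / 8"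
proof -
  note c = chernoff_constants[OF u]
  show "0 < lam" "lam \<le> 1" using c by simp_all
  show "0 \<le> lam * \<psi>" using c \<psi> by simp
  show "lam * \<psi> \<le> 1"
    using order_trans[OF mult_left_mono[of \<psi> "psi_max u" lam] c(6)] c(3) \<psi> by simp
  have "\<psi>^2 \<le> psi_max u ^ 2" using \<psi> by (simp add: power_mono)
  hence "lam * (1 + \<psi>^2) \<le> lam * (1 + psi_max u ^ 2)" using c by (intro mult_left_mono) auto
  thus "lam * (1 + \<psi>^2) \<le> gap_min u / 8" using c by linarith
qed

lemma rate_eq: "rate = lam * gap_min u / 8"
  by (simp add: chernoff_rate_def)

lemma lam_gap_min: "0 < lam * gap_min u" "lam * gap_min u \<le> lam * gap"
  using gap_ge_gap_min lam_bounds(1) chernoff_constants(2)[OF u] by (simp_all add: mult_left_mono)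

lemma prob_defective_above_threshold:
  assumes "j \<in> Sd"
  shows "measure_pmf.prob (gt_pmf M N p u q) {s. real M * p * threshold \<le> coal_score \<psi> M Sd s j}
     \<le> exp (- rate * (real M * p))"
proof -
  define \<phi> where "\<phi> = rho_def * exp lam + (1 - rho_def) * exp (-lam*\<psi>) - 1"
  have "measure_pmf.prob (gt_pmf M N p u q) {s. real M * p * threshold \<le> coal_score \<psi> M Sd s j}
     \<le> (1 + p * \<phi>) ^ M / exp (lam * (real M * p * threshold))"
    using prob_defective_score_ge[OF p_bounds probabilities Sd(1) assms, where lm = lam] lam_bounds
    by (simp add: \<phi>_def rho_def_def Sd(2))
  also have "\<dots> = (1 + p * \<phi>) ^ M * exp (real M * p * (- lam * threshold))"
    by (simp add: exp_minus divide_inverse mult_ac)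
  also have "\<dots> \<le> exp (- rate * (real M * p))"
  proof (rule power_mult_exp_le[OF p_bounds])
    show "-1 \<le> \<phi>" using rho_bounds by (simp add: \<phi>_def)
    have "\<phi> \<le> (rho_def * (lam) + (1 - rho_def) * (-lam*\<psi>)) + ((lam)^2 + (-lam*\<psi>)^2)"
      unfolding \<phi>_def using rho_bounds lam_bounds by (intro convex_comb_exp_le) auto
    also have "\<dots> = lam * drift rho_def + lam * (lam * (1 + \<psi>^2))"
      by (simp add: drift_def algebra_simps power2_eq_square)
    also have "\<dots> \<le> lam * drift rho_def + lam * (gap_min u / 8)"
      using lam_bounds by (intro add_left_mono mult_left_mono) auto
    finally show "\<phi> + - lam * threshold \<le> - rate"
      using lam_gap_min
      by (simp add: threshold_def rate_eq algebra_simps)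
  qed
  finally show ?thesis .
qed

lemma level_pos: "level M > 0"
  by (simp add: level_def)

lemma prob_item_mgf_prod_above_level:
  "measure_pmf.prob (gt_pmf M N p u q) {s. level M < (\<Prod>l<M. item_mgf lam \<psi> p Sd (test_row s l))}
     \<le> exp (- rate * (real M * p))"
proof -
  define \<phi> where "\<phi> = rho_neg * exp (-lam) + (1 - rho_neg) * exp (lam*\<psi>) - 1"
  have "measure_pmf.prob (gt_pmf M N p u q) {s. level M < (\<Prod>l<M. item_mgf lam \<psi> p Sd (test_row s l))}
     \<le> (1 + p * \<phi>) ^ M / level M"
    using prob_item_mgf_prod_gt[OF p_bounds probabilities Sd(1) level_pos, where lm = lam]
    by (simp add: \<phi>_def rho_neg_def Sd(2))
  also have "\<dots> = (1 + p * \<phi>) ^ M * exp (real M * p * (lam * (threshold + gap / 4)))"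
    by (simp only: level_def exp_minus divide_inverse inverse_inverse_eq)
  also have "\<dots> \<le> exp (- rate * (real M * p))"
  proof (rule power_mult_exp_le[OF p_bounds])
    show "-1 \<le> \<phi>" using rho_bounds by (simp add: \<phi>_def)
    have "\<phi> \<le> (rho_neg * (-lam) + (1 - rho_neg) * (lam*\<psi>)) + ((-lam)^2 + (lam*\<psi>)^2)"
      unfolding \<phi>_def using rho_bounds lam_bounds by (intro convex_comb_exp_le) auto
    also have "\<dots> = - lam * drift rho_neg + lam * (lam * (1 + \<psi>^2))"
      by (simp add: drift_def algebra_simps power2_eq_square)
    also have "\<dots> \<le> - lam * drift rho_neg + lam * (gap_min u / 8)"
      using lam_bounds by (intro add_left_mono mult_left_mono) auto
    finally show "\<phi> + lam * (threshold + gap / 4) \<le> - rate"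
      using lam_gap_min
      by (simp add: threshold_def gap_def rate_eq algebra_simps)
  qed
  finally show ?thesis .
qed

lemma prob_nondefectives_below_threshold:
  assumes S: "S \<subseteq> {..<N} - Sd"
  shows "measure_pmf.prob (gt_pmf M N p u q)
      {s. (\<forall>k\<in>S. coal_score \<psi> M Sd s k \<le> real M * p * threshold)
          \<and> (\<Prod>l<M. item_mgf lam \<psi> p Sd (test_row s l)) \<le> level M}
     \<le> exp (- rate * (real (card S) * (real M * p)))"
proof -
  have "measure_pmf.prob (gt_pmf M N p u q)
      {s. (\<forall>k\<in>S. coal_score \<psi> M Sd s k \<le> real M * p * threshold)
          \<and> (\<Prod>l<M. item_mgf lam \<psi> p Sd (test_row s l)) \<le> level M}
     \<le> level M ^ card S / exp (- lam * card S * (real M * p * threshold))"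
    using S lam_bounds
    by (intro prob_nondefective_scores_le[OF p_bounds probabilities Sd(1)]) (auto simp: level_def)
  also have "\<dots> = exp (- (real (card S) * (real M * p)) * (lam * gap / 4))"
    by (simp add: level_def exp_of_nat_mult[symmetric] exp_diff[symmetric] algebra_simps)
  also have "\<dots> \<le> exp (- rate * (real (card S) * (real M * p)))"
  proof -
    have "rate \<le> lam * gap / 4"
      using lam_gap_min
      by (simp add: rate_eq)
    moreover have "0 \<le> real (card S) * (real M * p)" using p_bounds by simp
    ultimately have "rate * (real (card S) * (real M * p)) \<le> lam * gap / 4 * (real (card S) * (real M * p))"
      by (rule mult_right_mono)
    thus ?thesis by (simp add: mult.commute)
  qed
  finally show ?thesis .
qed

lemma prob_fail_le:
  assumes L: "1 \<le> L" "L \<le> N - K"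
  shows "measure_pmf.prob (gt_pmf M N p u q) {s. \<not> alg_succeeds N L Sd (coal_score \<psi> M Sd s)}
     \<le> (1 + real K) * exp (- rate * (real M * p))
       + real ((N - K) choose (L - 1)) * exp (- rate * (real (N - K - (L - 1)) * (real M * p)))"
proof -
  define m where "m = N - K - (L - 1)"
  define t where "t = real M * p * threshold"
  define \<S> where "\<S> = {S. S \<subseteq> {..<N} - Sd \<and> card S = m}"
  have "finite \<S>" by (rule finite_subset[of _ "Pow {..<N}"]) (auto simp: \<S>_def)
  have "card \<S> = (N - K) choose (L - 1)"
  proof -
    have "card \<S> = card ({..<N} - Sd) choose m" unfolding \<S>_def by (rule n_subsets) auto
    also have "card ({..<N} - Sd) = N - K" using Sd by (simp add: card_Diff_subset finite_subset)
    also have "(N - K) choose m = (N - K) choose (L - 1)"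
      unfolding m_def using L by (intro binomial_symmetric[symmetric]) auto
    finally show ?thesis .
  qed
  have "finite Sd" using Sd(1) finite_subset by blast
  have "{s. \<not> alg_succeeds N L Sd (coal_score \<psi> M Sd s)} \<subseteq>
      {s. level M < (\<Prod>l<M. item_mgf lam \<psi> p Sd (test_row s l))}
      \<union> (\<Union>j\<in>Sd. {s. t \<le> coal_score \<psi> M Sd s j})
      \<union> (\<Union>S\<in>\<S>. {s. (\<forall>k\<in>S. coal_score \<psi> M Sd s k \<le> t)
                    \<and> (\<Prod>l<M. item_mgf lam \<psi> p Sd (test_row s l)) \<le> level M})"
  proof (intro subsetI, elim CollectE)
    fix s assume fail: "\<not> alg_succeeds N L Sd (coal_score \<psi> M Sd s)"
    show "s \<in> {s. level M < (\<Prod>l<M. item_mgf lam \<psi> p Sd (test_row s l))}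
      \<union> (\<Union>j\<in>Sd. {s. t \<le> coal_score \<psi> M Sd s j})
      \<union> (\<Union>S\<in>\<S>. {s. (\<forall>k\<in>S. coal_score \<psi> M Sd s k \<le> t)
                    \<and> (\<Prod>l<M. item_mgf lam \<psi> p Sd (test_row s l)) \<le> level M})"
    proof (cases "\<forall>j\<in>Sd. coal_score \<psi> M Sd s j < t")
      case True
      from not_alg_succeeds_imp_low_scoring_subset[OF fail True Sd(1) L(1)] obtain S
        where "S \<subseteq> {..<N} - Sd" "card S = m" "\<forall>k\<in>S. coal_score \<psi> M Sd s k \<le> t"
        by (auto simp: Sd(2) m_def)
      thus ?thesis by (cases "level M < (\<Prod>l<M. item_mgf lam \<psi> p Sd (test_row s l))") (auto simp: \<S>_def)
    qed (auto simp: not_less)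
  qed
  hence "measure_pmf.prob (gt_pmf M N p u q) {s. \<not> alg_succeeds N L Sd (coal_score \<psi> M Sd s)}
     \<le> exp (- rate * (real M * p)) + card Sd * exp (- rate * (real M * p))
       + card \<S> * exp (- rate * (real m * (real M * p)))"
    using prob_item_mgf_prod_above_level prob_defective_above_threshold
      prob_nondefectives_below_threshold
    by (intro prob_le_union_bound[OF \<open>finite Sd\<close> \<open>finite \<S>\<close>]) (auto simp: t_def \<S>_def)
  thus ?thesis by (simp add: \<open>card \<S> = _\<close> Sd(2) m_def algebra_simps)
qed

lemma test_count_denominator_bounds:
  defines "den \<equiv> (1 - q) * (1 - u / (1 - (1 - u) * p))^2 * (1 + \<psi>)"
  shows "0 < den" "den \<le> 1 + psi_max u"
proof -
  define \<gamma> where "\<gamma> = u / (1 - (1 - u) * p)"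
  have "u < 1 - (1 - u) * p" using u beta_bounds by linarith
  hence \<gamma>: "0 \<le> \<gamma>" "\<gamma> < 1" using u beta_bounds by (simp_all add: \<gamma>_def)
  show "0 < den" using q \<gamma> \<psi> by (simp add: den_def \<gamma>_def[symmetric])
  have "(1 - q) * (1 - \<gamma>)^2 \<le> 1 * 1" using q \<gamma> by (intro mult_mono) (auto simp: power_le_one)
  hence "(1 - q) * (1 - \<gamma>)^2 * (1 + \<psi>) \<le> 1 * (1 + psi_max u)"
    using q \<gamma> \<psi> by (intro mult_mono) auto
  thus "den \<le> 1 + psi_max u" by (simp add: den_def \<gamma>_def)
qed

lemma tests_per_item_ge:
  fixes c0 X :: real and M :: nat
  assumes c0: "0 \<le> c0" and X: "0 \<le> X"
    and M: "(1 + c0) * (real K * (1 - u) / ((1 - q) * (1 - u / (1 - (1 - u) * p))^2 * (1 + \<psi>))) * X \<le> real M"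
  shows "X / (1 + psi_max u) \<le> real M * p"
proof -
  define den where "den = (1 - q) * (1 - u / (1 - (1 - u) * p))^2 * (1 + \<psi>)"
  define D where "D = 1 + psi_max u"
  have den: "0 < den" "den \<le> D" using test_count_denominator_bounds by (simp_all add: den_def D_def)
  have "0 \<le> real K * (1 - u) / den" using den u by simp
  have "real K * (1 - u) / D * X \<le> real K * (1 - u) / den * X"
    using den u K X by (intro mult_right_mono divide_left_mono) auto
  also have "\<dots> = 1 * (real K * (1 - u) / den) * X" by simp
  also have "\<dots> \<le> (1 + c0) * (real K * (1 - u) / den) * X"
    using c0 X \<open>0 \<le> real K * (1 - u) / den\<close> by (intro mult_right_mono) auto
  also have "\<dots> \<le> real M" using M by (simp add: den_def)
  finally have "real K * (1 - u) / D * X * p \<le> real M * p" using p_bounds(1) by (rule mult_right_mono)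
  moreover have "real K * (1 - u) / D * X * p = X / D * (real K * (1 - u) * p)" by simp
  moreover have "real K * (1 - u) * p = 1" using u_p K by (simp add: mult.assoc)
  ultimately show ?thesis by (simp only: mult_1_right D_def)
qed

lemma prob_fail_lt:
  fixes c0 Ca1 Ca2 :: real and L M :: nat
  defines "lg \<equiv> ln (real K * real ((N - K) choose (L - 1)))"
  assumes c0: "0 \<le> c0" and L: "1 \<le> L" "L \<le> N - K"
    and Ca: "(1 + psi_max u) * (c0 + 2) / rate \<le> Ca1" "(1 + psi_max u) * (c0 + 3) / rate \<le> Ca2"
    and M: "real M \<ge> (1 + c0) * (real K * (1 - u) / ((1 - q) * (1 - u / (1 - (1 - u) * p))^2 * (1 + \<psi>))) *
                  (Ca1 * lg / (real (N - K) - real (L - 1)) + Ca2 * ln (real K))"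
  shows "measure_pmf.prob (gt_pmf M N p u q) {s. \<not> alg_succeeds N L Sd (coal_score \<psi> M Sd s)}
     < exp (- c0 * lg) + exp (- c0 * ln (real K))"
proof -
  define C where "C = (N - K) choose (L - 1)"
  define m where "m = real (N - K) - real (L - 1)"
  define D where "D = 1 + psi_max u"
  define X where "X = Ca1 * lg / m + Ca2 * ln (real K)"
  have rate: "rate > 0" and D: "D > 0" using chernoff_constants[OF u] by (simp_all add: D_def)
  have m: "m = real (N - K - (L - 1))" "m \<ge> 1" using L by (auto simp: m_def)
  have C: "C \<ge> 1" using L by (simp add: C_def Suc_le_eq)
  have lnK: "ln (real K) \<ge> 0" using K by simp
  have "1 \<le> real K * real C" using K C mult_mono[of 1 "real K" 1 "real C"] by simp
  hence lg: "lg \<ge> 0" by (simp add: lg_def C_def)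
  have Ca_pos: "0 \<le> Ca1" "0 \<le> Ca2"
    using Ca c0 rate D by (auto simp: D_def[symmetric] intro: order_trans[rotated])
  have Mp: "X / D \<le> real M * p"
    using tests_per_item_ge[OF c0 _ M] Ca_pos lg lnK m(2) by (simp add: X_def D_def m_def)
  have "c0 + 3 \<le> rate * Ca2 / D" using Ca(2) rate D by (simp add: D_def[symmetric] field_simps)
  hence "(c0 + 3) * ln (real K) \<le> rate * Ca2 / D * ln (real K)" using lnK by (rule mult_right_mono)
  also have "\<dots> = rate * (Ca2 * ln (real K) / D)" by simp
  also have "\<dots> \<le> rate * (real M * p)"
  proof -
    have "Ca2 * ln (real K) / D \<le> X / D" using Ca_pos lg m(2) D by (intro divide_right_mono) (auto simp: X_def)
    thus ?thesis using Mp rate by (intro mult_left_mono) auto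
  qed
  finally have tests_defective: "(c0 + 3) * ln (real K) \<le> rate * (real M * p)" .
  have "c0 + 2 \<le> rate * Ca1 / D" using Ca(1) rate D by (simp add: D_def[symmetric] field_simps)
  hence "(c0 + 2) * lg \<le> rate * Ca1 / D * lg" using lg by (rule mult_right_mono)
  also have "\<dots> = rate * (m * (Ca1 * lg / m / D))" using m(2) by simp
  also have "\<dots> \<le> rate * (m * (real M * p))"
  proof -
    have "Ca1 * lg / m / D \<le> X / D" using Ca_pos lnK D by (intro divide_right_mono) (auto simp: X_def)
    thus ?thesis using Mp rate m(2) by (intro mult_left_mono) auto
  qed
  finally have tests_nondefective: "(c0 + 2) * lg \<le> rate * (m * (real M * p))" .
  have "measure_pmf.prob (gt_pmf M N p u q) {s. \<not> alg_succeeds N L Sd (coal_score \<psi> M Sd s)}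
     \<le> (1 + real K) * exp (- (rate * (real M * p))) + real C * exp (- (rate * (m * (real M * p))))"
    using prob_fail_le[OF L, of M] by (simp add: C_def m(1))
  also have "\<dots> < exp (- c0 * lg) + exp (- c0 * ln (real K))"
    using tail_sum_lt[OF K C tests_defective] tests_nondefective by (simp add: lg_def C_def)
  finally show ?thesis .
qed
end

lemma coal_success_prob_gt:
  fixes u q c0 \<psi> Ca1 Ca2 :: real and N K L M :: nat and Sd :: "nat set"
  defines "lg \<equiv> ln (real K * real ((N - K) choose (L - 1)))"
  assumes u: "0 \<le> u" "u < 1/2" and q: "0 \<le> q" "q < 1/2" and c0: "0 \<le> c0"
    and \<psi>: "0 \<le> \<psi>" "\<psi> \<le> psi_max u"
    and Ca: "(1 + psi_max u) * (c0 + 2) / chernoff_rate u \<le> Ca1"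
      "(1 + psi_max u) * (c0 + 3) / chernoff_rate u \<le> Ca2"
    and K: "K > 1" and Sd: "Sd \<subseteq> {..<N}" "card Sd = K" and L: "1 \<le> L" "L \<le> N - K"
    and M: "real M \<ge> (1 + c0) * (real K * (1 - u) / ((1 - q) * (1 - u / (1 - (1 - u) * (1 / ((1 - u) * real K))))^2 * (1 + \<psi>))) *
                  (Ca1 * lg / (real (N - K) - real (L - 1)) + Ca2 * ln (real K))"
  shows "measure_pmf.prob (gt_pmf M N (1 / ((1 - u) * real K)) u q) {s. alg_succeeds N L Sd (coal_score \<psi> M Sd s)}
     > 1 - exp (- c0 * lg) - exp (- c0 * ln (real K))"
proof -
  interpret noisy_group_testing u q \<psi> N K Sd
    using u q \<psi> Sd K by unfold_locales auto
  have "measure_pmf.prob (gt_pmf M N (1 / ((1 - u) * real K)) u q)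
      {s. \<not> alg_succeeds N L Sd (coal_score \<psi> M Sd s)} < exp (- c0 * lg) + exp (- c0 * ln (real K))"
    using prob_fail_lt[OF c0 L Ca, of M] M unfolding lg_def p_def by simp
  thus ?thesis by (subst prob_Collect_eq_1_minus_prob_not) simp
qed

lemma coal_parameter_bounds:
  fixes u q :: real and K :: nat
  assumes u: "0 \<le> u" "u < 1/2" and q: "0 \<le> q" "q < 1/2" and K: "K > 1"
  defines "\<beta> \<equiv> 1 - (1 - u) * (1 / ((1 - u) * real K))"
  defines "\<gamma> \<equiv> u / \<beta>" and "\<Gamma> \<equiv> (1 - q) * \<beta> ^ K"
  shows "0 \<le> \<gamma> * \<Gamma> / (1 - \<gamma> * \<Gamma>)" "\<gamma> * \<Gamma> / (1 - \<gamma> * \<Gamma>) \<le> psi_max u"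
proof -
  have "\<beta> = 1 - 1 / real K" using u by (simp add: \<beta>_def)
  moreover have "1 / real K \<le> 1 / 2" using K by simp
  ultimately have \<beta>: "1/2 \<le> \<beta>" "\<beta> \<le> 1" by simp_all
  have \<gamma>: "0 \<le> \<gamma>" "\<gamma> \<le> 2 * u"
    using u \<beta> divide_left_mono[of "1/2" \<beta> u] by (auto simp: \<gamma>_def)
  have \<Gamma>: "0 \<le> \<Gamma>" "\<Gamma> \<le> 1"
    using q \<beta> mult_mono[of "1 - q" 1 "\<beta> ^ K" 1] by (auto simp: \<Gamma>_def power_le_one)
  have "0 \<le> \<gamma> * \<Gamma>" "\<gamma> * \<Gamma> \<le> 2 * u" using \<gamma> \<Gamma> mult_mono[of \<gamma> "2*u" \<Gamma> 1] u by auto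
  thus "0 \<le> \<gamma> * \<Gamma> / (1 - \<gamma> * \<Gamma>)" "\<gamma> * \<Gamma> / (1 - \<gamma> * \<Gamma>) \<le> psi_max u"
    unfolding psi_max_def using u by (auto intro: frac_le)
qed

theorem theorem1:
  fixes u q c0 :: real
  assumes u: "0 \<le> u" "u < 1/2" and q: "0 \<le> q" "q < 1/2" and c0: "c0 > 0"
  shows
   "(\<exists>Ca1 Ca2 :: real. Ca1 > 0 \<and> Ca2 > 0 \<and>
      (\<forall>N K L M :: nat. \<forall>Sd :: nat set.
         let p = 1 / ((1 - u) * real K);
             \<Gamma> = (1 - q) * (1 - (1 - u) * p) ^ K;
             \<gamma>0 = u / (1 - (1 - u) * p);
             \<psi>0 = (0::real);
             lg = ln (real K * real ((N - K) choose (L - 1)))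
         in (K > 1 \<and> Sd \<subseteq> {..<N} \<and> card Sd = K \<and> 1 \<le> L \<and> L \<le> N - K \<and>
             real M \<ge> (1 + c0) * (real K * (1 - u) / ((1 - q) * (1 - \<gamma>0)^2 * (1 + \<psi>0))) *
                  (Ca1 * lg / (real (N - K) - real (L - 1)) + Ca2 * ln (real K)))
            \<longrightarrow> measure_pmf.prob (gt_pmf M N p u q)
                  {s. alg_succeeds N L Sd (roal_score M Sd s)}
                > 1 - exp (- c0 * lg) - exp (- c0 * ln (real K))))
    \<and>
    (\<exists>Ca1 Ca2 :: real. Ca1 > 0 \<and> Ca2 > 0 \<and>
      (\<forall>N K L M :: nat. \<forall>Sd :: nat set.
         let p = 1 / ((1 - u) * real K);
             \<Gamma> = (1 - q) * (1 - (1 - u) * p) ^ K;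
             \<gamma>0 = u / (1 - (1 - u) * p);
             \<psi>0 = \<gamma>0 * \<Gamma> / (1 - \<gamma>0 * \<Gamma>);
             lg = ln (real K * real ((N - K) choose (L - 1)))
         in (K > 1 \<and> Sd \<subseteq> {..<N} \<and> card Sd = K \<and> 1 \<le> L \<and> L \<le> N - K \<and>
             real M \<ge> (1 + c0) * (real K * (1 - u) / ((1 - q) * (1 - \<gamma>0)^2 * (1 + \<psi>0))) *
                  (Ca1 * lg / (real (N - K) - real (L - 1)) + Ca2 * ln (real K)))
            \<longrightarrow> measure_pmf.prob (gt_pmf M N p u q)
                  {s. alg_succeeds N L Sd (coal_score \<psi>0 M Sd s)}
                > 1 - exp (- c0 * lg) - exp (- c0 * ln (real K))))"
proof -
  define Ca1 where "Ca1 = (1 + psi_max u) * (c0 + 2) / chernoff_rate u"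
  define Ca2 where "Ca2 = (1 + psi_max u) * (c0 + 3) / chernoff_rate u"
  have Ca: "Ca1 > 0" "Ca2 > 0"
    using chernoff_constants[OF u] c0 by (simp_all add: Ca1_def Ca2_def add_pos_nonneg)
  note success = coal_success_prob_gt[OF u q less_imp_le[OF c0] _ _ order_refl order_refl, folded Ca1_def Ca2_def]
  show ?thesis
  proof ((intro conjI; rule exI[of _ Ca1], rule exI[of _ Ca2], intro conjI Ca allI,
      unfold Let_def, intro impI), goal_cases)
    case (1 N K L M Sd)
    then show ?case
      unfolding roal_score_eq_coal_score using chernoff_constants(1)[OF u] by (intro success) auto
  next
    case (2 N K L M Sd)
    then show ?case using coal_parameter_bounds[OF u q, of K] by (intro success) auto
  qed
qed

end
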